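(* Let $\{r_k\}_{k\ge1}$ be a sequence in $\mathbb R^N$ and let $\{a_k\}_{k\ge1}\subset(0,1)$ satisfy $\sum_{k=1}^{+\infty}a_k=+\infty$. Assume that $F_{k+1}:=r_{k+1}+\sum_{j=1}^k a_jr_j$ has a finite limit in $\mathbb R^N$ as $k\to+\infty$. Then $\lim_{k\to+\infty}\|r_k\|=0$. *)

theory Defs
  imports "HOL-Analysis.Analysis"
begin

end

theory Submission
  imports Defs
begin

text \<open>The partial sums \<open>S\<^sub>k = \<Sum>\<^sub>j\<^sub>\<le>\<^sub>k a\<^sub>j r\<^sub>j\<close> satisfy
  \<open>S\<^sub>k\<^sub>+\<^sub>1 = (1 - a\<^sub>k\<^sub>+\<^sub>1) S\<^sub>k + a\<^sub>k\<^sub>+\<^sub>1 F\<^sub>k\<^sub>+\<^sub>1\<close>: each step moves \<open>S\<close> a fraction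
  \<open>a\<^sub>k\<^sub>+\<^sub>1\<close> of the way towards \<open>F\<close>. Once \<open>F\<close> is within \<open>\<epsilon>\<close> of its limit \<open>L\<close>, the excess
  \<open>\<parallel>S\<^sub>k - L\<parallel> - \<epsilon>\<close> is multiplied by at most \<open>1 - a\<^sub>k\<^sub>+\<^sub>1 \<le> exp (- a\<^sub>k\<^sub>+\<^sub>1)\<close> per step, and the
  divergence of \<open>\<Sum> a\<^sub>k\<close> drives the product of these factors to \<open>0\<close>. Hence \<open>S\<^sub>k \<rightarrow> L\<close>
  and \<open>r\<^sub>k\<^sub>+\<^sub>1 = F\<^sub>k\<^sub>+\<^sub>1 - S\<^sub>k \<rightarrow> 0\<close>.\<close>

lemma prod_one_minus_le_exp_neg_sum:
  fixes t :: "'a \<Rightarrow> real"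
  assumes "\<And>k. k \<in> A \<Longrightarrow> t k \<le> 1"
  shows "(\<Prod>k\<in>A. 1 - t k) \<le> exp (- (\<Sum>k\<in>A. t k))"
proof (cases "finite A")
  case True
  have "1 - t k \<le> exp (- t k)" for k
    using exp_ge_add_one_self[of "- t k"] by simp
  then have "(\<Prod>k\<in>A. 1 - t k) \<le> (\<Prod>k\<in>A. exp (- t k))"
    using assms by (intro prod_mono) auto
  also have "\<dots> = exp (- (\<Sum>k\<in>A. t k))"
    using True by (simp add: exp_sum flip: sum_negf)
  finally show ?thesis .
qed simp

lemma prod_one_minus_tendsto_0:
  fixes t :: "nat \<Rightarrow> real"
  assumes t_le_1: "\<And>k. t k \<le> 1"
    and t_div: "filterlim (\<lambda>n. \<Sum>k<n. t k) at_top sequentially"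
  shows "(\<lambda>n. \<Prod>k=m..<n. 1 - t k) \<longlonglongrightarrow> 0"
proof (rule tendsto_sandwich[where f = "\<lambda>_. 0" and h = "\<lambda>n. exp (- (\<Sum>k=m..<n. t k))"])
  have "filterlim (\<lambda>n. - (\<Sum>k<m. t k) + (\<Sum>k<n. t k)) at_top sequentially"
    using tendsto_const t_div by (rule filterlim_tendsto_add_at_top)
  moreover have "\<forall>\<^sub>F n in sequentially. - (\<Sum>k<m. t k) + (\<Sum>k<n. t k) = (\<Sum>k=m..<n. t k)"
    using eventually_ge_at_top[of m]
    by eventually_elim (use sum_diff_nat_ivl[of 0 m _ t] in \<open>simp add: atLeast0LessThan\<close>)
  ultimately have "filterlim (\<lambda>n. \<Sum>k=m..<n. t k) at_top sequentially"
    by (rule filterlim_cong[OF refl refl, THEN iffD1, rotated])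
  then show "(\<lambda>n. exp (- (\<Sum>k=m..<n. t k))) \<longlonglongrightarrow> 0"
    by (intro filterlim_compose[OF exp_at_bot] filterlim_compose[OF filterlim_uminus_at_bot_at_top])
  show "\<forall>\<^sub>F n in sequentially. 0 \<le> (\<Prod>k=m..<n. 1 - t k)"
    using t_le_1 by (intro always_eventually allI prod_nonneg) simp
  show "\<forall>\<^sub>F n in sequentially. (\<Prod>k=m..<n. 1 - t k) \<le> exp (- (\<Sum>k=m..<n. t k))"
    using t_le_1 by (simp add: prod_one_minus_le_exp_neg_sum)
qed simp

lemma le_prod_of_step_le:
  fixes v q :: "nat \<Rightarrow> 'a::linordered_idom"
  assumes decay: "\<And>k. m \<le> k \<Longrightarrow> v (Suc k) \<le> q k * v k"
    and q_nonneg: "\<And>k. m \<le> k \<Longrightarrow> 0 \<le> q k"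
    and "m \<le> n"
  shows "v n \<le> v m * (\<Prod>k=m..<n. q k)"
  using \<open>m \<le> n\<close>
proof (induction n rule: dec_induct)
  case (step k)
  have "v (Suc k) \<le> q k * v k"
    using step.hyps(1) by (rule decay)
  also have "\<dots> \<le> q k * (v m * (\<Prod>i=m..<k. q i))"
    using step.IH q_nonneg step.hyps(1) by (intro mult_left_mono) auto
  finally show ?case
    using step.hyps(1) by (simp add: prod.atLeastLessThan_Suc ac_simps)
qed simp

lemma relaxation_inequality_tendsto_0:
  fixes d c t :: "nat \<Rightarrow> real"
  assumes t_nonneg: "\<And>k. 0 \<le> t k" and t_le_1: "\<And>k. t k \<le> 1"
    and t_div: "filterlim (\<lambda>n. \<Sum>k<n. t k) at_top sequentially"
    and c: "c \<longlonglongrightarrow> 0"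
    and d_nonneg: "\<And>k. 0 \<le> d k"
    and step: "\<And>k. d (Suc k) \<le> (1 - t k) * d k + t k * c k"
  shows "d \<longlonglongrightarrow> 0"
  unfolding tendsto_iff dist_real_def
proof (intro allI impI)
  fix \<epsilon> :: real
  assume "\<epsilon> > 0"
  define e where "e = \<epsilon> / 2"
  have "e > 0" using \<open>\<epsilon> > 0\<close> by (simp add: e_def)
  then obtain K where K: "\<And>k. k \<ge> K \<Longrightarrow> c k < e"
    using order_tendstoD(2)[OF c] unfolding eventually_sequentially by blast
  have excess_step: "d (Suc k) - e \<le> (1 - t k) * (d k - e)" if "k \<ge> K" for k
  proof -
    have "t k * c k \<le> t k * e"
      using K[OF that] t_nonneg by (intro mult_left_mono) auto
    then show ?thesis
      using step[of k] by (simp add: algebra_simps)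
  qed
  have "(\<lambda>n. (d K - e) * (\<Prod>k=K..<n. 1 - t k)) \<longlonglongrightarrow> (d K - e) * 0"
    using t_le_1 t_div by (intro tendsto_mult tendsto_const prod_one_minus_tendsto_0)
  then have "\<forall>\<^sub>F n in sequentially. (d K - e) * (\<Prod>k=K..<n. 1 - t k) < e"
    using \<open>e > 0\<close> by (intro order_tendstoD) auto
  then show "\<forall>\<^sub>F n in sequentially. \<bar>d n - 0\<bar> < \<epsilon>"
    using eventually_ge_at_top[of K]
  proof eventually_elim
    case (elim n)
    \<comment> \<open>The excess \<open>d n - e\<close> may be negative; the factors \<open>1 - t k\<close> are not.\<close>
    have "d n - e \<le> (d K - e) * (\<Prod>k=K..<n. 1 - t k)"
      using excess_step t_le_1 elim(2) by (intro le_prod_of_step_le[where v = "\<lambda>k. d k - e"]) auto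
    then show ?case
      using elim(1) d_nonneg[of n] by (simp add: e_def)
  qed
qed

lemma relaxation_iteration_tendsto:
  fixes x y :: "nat \<Rightarrow> 'a::real_normed_vector" and t :: "nat \<Rightarrow> real"
  assumes t_nonneg: "\<And>k. 0 \<le> t k" and t_le_1: "\<And>k. t k \<le> 1"
    and t_div: "filterlim (\<lambda>n. \<Sum>k<n. t k) at_top sequentially"
    and y: "y \<longlonglongrightarrow> L"
    and step: "\<And>k. x (Suc k) = (1 - t k) *\<^sub>R x k + t k *\<^sub>R y k"
  shows "x \<longlonglongrightarrow> L"
proof -
  have dist_step: "norm (x (Suc k) - L) \<le> (1 - t k) * norm (x k - L) + t k * norm (y k - L)" for k
  proof -
    have "x (Suc k) - L = (1 - t k) *\<^sub>R (x k - L) + t k *\<^sub>R (y k - L)"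
      by (simp add: step algebra_simps)
    also have "norm \<dots> \<le> norm ((1 - t k) *\<^sub>R (x k - L)) + norm (t k *\<^sub>R (y k - L))"
      by (rule norm_triangle_ineq)
    finally show ?thesis
      using t_nonneg[of k] t_le_1[of k] by simp
  qed
  have y_dist: "(\<lambda>k. norm (y k - L)) \<longlonglongrightarrow> 0"
    using y by (rule tendsto_norm_zero[OF LIM_zero])
  have "(\<lambda>k. norm (x k - L)) \<longlonglongrightarrow> 0"
    using t_nonneg t_le_1 t_div y_dist norm_ge_zero dist_step by (rule relaxation_inequality_tendsto_0)
  then show ?thesis
    by (rule LIM_zero_cancel[OF tendsto_norm_zero_cancel])
qed

theorem lemmaA5:
  fixes r :: "nat \<Rightarrow> real ^ 'n" and a :: "nat \<Rightarrow> real"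
  assumes a_bounds: "\<And>k. k \<ge> 1 \<Longrightarrow> 0 < a k \<and> a k < 1"
    and a_div: "filterlim (\<lambda>n. \<Sum>k=1..n. a k) at_top sequentially"
    and F_conv: "convergent (\<lambda>k. r (k + 1) + (\<Sum>j=1..k. a j *\<^sub>R r j))"
  shows "(\<lambda>k. norm (r k)) \<longlonglongrightarrow> 0"
proof -
  define S where "S k = (\<Sum>j=1..k. a j *\<^sub>R r j)" for k
  define F where "F k = r (k + 1) + S k" for k
  obtain L where F: "F \<longlonglongrightarrow> L"
    using F_conv unfolding convergent_def F_def S_def by blast
  have S_step: "S (Suc k) = (1 - a (Suc k)) *\<^sub>R S k + a (Suc k) *\<^sub>R F k" for k
  proof -
    have "S (Suc k) = S k + a (Suc k) *\<^sub>R r (Suc k)"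
      by (simp add: S_def)
    then show ?thesis
      by (simp add: F_def algebra_simps)
  qed
  have "(\<Sum>k<n. a (Suc k)) = (\<Sum>k=1..n. a k)" for n
    by (simp add: sum.atLeast1_atMost_eq)
  then have a_shift_div: "filterlim (\<lambda>n. \<Sum>k<n. a (Suc k)) at_top sequentially"
    using a_div by simp
  have "S \<longlonglongrightarrow> L"
    using a_bounds by (intro relaxation_iteration_tendsto[OF _ _ a_shift_div F S_step]) (auto simp: less_imp_le)
  with F have "(\<lambda>k. F k - S k) \<longlonglongrightarrow> L - L"
    by (intro tendsto_diff)
  then have "(\<lambda>k. r (Suc k)) \<longlonglongrightarrow> 0"
    by (simp add: F_def)
  then show ?thesis
    by (rule tendsto_norm_zero[OF LIMSEQ_imp_Suc])
qed

end
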